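(* Let $\Gamma=A\ast B$ with $A,B$ non-trivial, let $f=f_A\ast f_B$ be a split quasimorphism and $\widehat f$ its homogenization. Then $\mathrm{def}\,\widehat f\geq 2\max\{\mathrm{def}\, f_A,\mathrm{def}\, f_B\}$.
   Context: A quasimorphism is a map $f:\Gamma\to\mathbb{R}$ with $\mathrm{def}\, f=\sup_{g,h}|f(gh)-f(g)-f(h)|<\infty$; it is alternating if $f(g^{-1})=-f(g)$. Its homogenization is $\widehat f(g)=\lim_{n\to\infty}f(g^n)/n$. Each $1\neq g\in A\ast B$ has a unique normal form $g=a_1b_1\cdots a_nb_n$ ($a_i\in A$, $b_i\in B$, all non-trivial except possibly $a_1$ or $b_n$). For alternating quasimorphisms $f_A:A\to\mathbb{R}$, $f_B:B\to\mathbb{R}$, the split quasimorphism is $f(1)=0$ and $f(a_1b_1\cdots a_nb_n)=f_A(a_1)+f_B(b_1)+\dots+f_A(a_n)+f_B(b_n)$. *)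

theory Defs
  imports "HOL-Algebra.Group" "HOL-Library.Extended_Real" Complex_Main
begin

text \<open>Elements of A * B are reduced words: lists of letters Inl a (a in A, a not 1)
  and Inr b (b in B, b not 1), with no two adjacent letters from the same factor.
  The empty word is the identity.\<close>

fun fp_reduced :: "('a,'m) monoid_scheme \<Rightarrow> ('b,'n) monoid_scheme \<Rightarrow> ('a + 'b) list \<Rightarrow> bool" where
  "fp_reduced A B [] = True"
| "fp_reduced A B [Inl a] = (a \<in> carrier A \<and> a \<noteq> \<one>\<^bsub>A\<^esub>)"
| "fp_reduced A B [Inr b] = (b \<in> carrier B \<and> b \<noteq> \<one>\<^bsub>B\<^esub>)"
| "fp_reduced A B (Inl a # Inl a' # w) = False"
| "fp_reduced A B (Inr b # Inr b' # w) = False"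
| "fp_reduced A B (Inl a # Inr b # w) =
     (a \<in> carrier A \<and> a \<noteq> \<one>\<^bsub>A\<^esub> \<and> fp_reduced A B (Inr b # w))"
| "fp_reduced A B (Inr b # Inl a # w) =
     (b \<in> carrier B \<and> b \<noteq> \<one>\<^bsub>B\<^esub> \<and> fp_reduced A B (Inl a # w))"

fun fp_cons :: "('a,'m) monoid_scheme \<Rightarrow> ('b,'n) monoid_scheme \<Rightarrow> ('a + 'b) \<Rightarrow> ('a + 'b) list \<Rightarrow> ('a + 'b) list" where
  "fp_cons A B (Inl a) [] = (if a = \<one>\<^bsub>A\<^esub> then [] else [Inl a])"
| "fp_cons A B (Inr b) [] = (if b = \<one>\<^bsub>B\<^esub> then [] else [Inr b])"
| "fp_cons A B (Inl a) (Inl a' # w) =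
     (let c = a \<otimes>\<^bsub>A\<^esub> a' in if c = \<one>\<^bsub>A\<^esub> then w else Inl c # w)"
| "fp_cons A B (Inr b) (Inr b' # w) =
     (let c = b \<otimes>\<^bsub>B\<^esub> b' in if c = \<one>\<^bsub>B\<^esub> then w else Inr c # w)"
| "fp_cons A B (Inl a) (Inr b # w) =
     (if a = \<one>\<^bsub>A\<^esub> then Inr b # w else Inl a # Inr b # w)"
| "fp_cons A B (Inr b) (Inl a # w) =
     (if b = \<one>\<^bsub>B\<^esub> then Inl a # w else Inr b # Inl a # w)"

definition fp_mult :: "('a,'m) monoid_scheme \<Rightarrow> ('b,'n) monoid_scheme \<Rightarrow> ('a + 'b) list \<Rightarrow> ('a + 'b) list \<Rightarrow> ('a + 'b) list" where
  "fp_mult A B u v = foldr (fp_cons A B) u v"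

definition free_product :: "('a,'m) monoid_scheme \<Rightarrow> ('b,'n) monoid_scheme \<Rightarrow> ('a + 'b) list monoid" where
  "free_product A B = \<lparr>carrier = {w. fp_reduced A B w}, mult = fp_mult A B, one = []\<rparr>"

definition qm_defect :: "('g,'m) monoid_scheme \<Rightarrow> ('g \<Rightarrow> real) \<Rightarrow> ereal" where
  "qm_defect G f = (SUP p \<in> carrier G \<times> carrier G.
      ereal \<bar>f (fst p \<otimes>\<^bsub>G\<^esub> snd p) - f (fst p) - f (snd p)\<bar>)"

definition quasimorphism :: "('g,'m) monoid_scheme \<Rightarrow> ('g \<Rightarrow> real) \<Rightarrow> bool" where
  "quasimorphism G f \<longleftrightarrow> qm_defect G f < \<infinity>"

definition alternating :: "('g,'m) monoid_scheme \<Rightarrow> ('g \<Rightarrow> real) \<Rightarrow> bool" where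
  "alternating G f \<longleftrightarrow> (\<forall>g \<in> carrier G. f (inv\<^bsub>G\<^esub> g) = - f g)"

definition homogenization :: "('g,'m) monoid_scheme \<Rightarrow> ('g \<Rightarrow> real) \<Rightarrow> 'g \<Rightarrow> real" where
  "homogenization G f g = lim (\<lambda>n::nat. f (g [^]\<^bsub>G\<^esub> n) / real n)"

definition split_qm :: "('a \<Rightarrow> real) \<Rightarrow> ('b \<Rightarrow> real) \<Rightarrow> ('a + 'b) list \<Rightarrow> real" where
  "split_qm fA fB w = sum_list (map (case_sum fA fB) w)"

end

theory Submission
  imports Defs
begin

text \<open>The homogenization \<open>\<hat>f\<close> of a split quasimorphism \<open>f\<close> agrees with \<open>f\<close> on cyclically
  reduced words, whose powers are plain concatenations. On a reduced word whose last and first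
  letters lie in the same factor, the powers merge these two letters, so \<open>\<hat>f\<close> sees the merged letter
  instead. For \<open>x, y \<in> A\<close> and \<open>1 \<noteq> b \<in> B\<close> the words \<open>g = y b x b\<inverse>\<close> and \<open>h = b y b\<inverse> x\<close> are
  cyclically reduced, so \<open>\<hat>f g = \<hat>f h = f\<^sub>A x + f\<^sub>A y\<close> as \<open>f\<^sub>B\<close> is alternating, whereas
  \<open>gh = y b (xy) b\<inverse> x\<close> merges to \<open>b (xy) b\<inverse> (xy)\<close> and \<open>\<hat>f (gh) = 2 f\<^sub>A (xy)\<close>. Hence the defect
  of \<open>\<hat>f\<close> at \<open>(g, h)\<close> is \<open>2 \<bar>f\<^sub>A (xy) - f\<^sub>A x - f\<^sub>A y\<bar>\<close>; the factor \<open>B\<close> is symmetric.\<close>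

definition fp_letter :: "('a,'m) monoid_scheme \<Rightarrow> ('b,'n) monoid_scheme \<Rightarrow> 'a + 'b \<Rightarrow> bool" where
  "fp_letter A B = case_sum (\<lambda>a. a \<in> carrier A \<and> a \<noteq> \<one>\<^bsub>A\<^esub>) (\<lambda>b. b \<in> carrier B \<and> b \<noteq> \<one>\<^bsub>B\<^esub>)"

lemma fp_reduced_iff:
  "fp_reduced A B w \<longleftrightarrow> (\<forall>l\<in>set w. fp_letter A B l) \<and> successively (\<lambda>l l'. isl l \<noteq> isl l') w"
  by (induction A B w rule: fp_reduced.induct) (auto simp: fp_letter_def)

lemma fp_cons_reduced: "fp_reduced A B (l # w) \<Longrightarrow> fp_cons A B l w = l # w"
  by (induction A B l w rule: fp_cons.induct) auto

lemma fp_mult_reduced: "fp_reduced A B (u @ v) \<Longrightarrow> fp_mult A B u v = u @ v"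
proof (induction u)
  case Nil
  then show ?case by (simp add: fp_mult_def)
next
  case (Cons l u)
  then have "fp_mult A B u v = u @ v"
    by (auto simp: fp_reduced_iff successively_Cons)
  with Cons.prems show ?case
    by (simp add: fp_mult_def fp_cons_reduced)
qed

lemma fp_mult_snoc: "fp_mult A B (u @ [l]) v = fp_mult A B u (fp_cons A B l v)"
  by (simp add: fp_mult_def)

lemma split_qm_Nil [simp]: "split_qm fA fB [] = 0"
  and split_qm_Cons [simp]: "split_qm fA fB (l # w) = case_sum fA fB l + split_qm fA fB w"
  and split_qm_append [simp]: "split_qm fA fB (u @ v) = split_qm fA fB u + split_qm fA fB v"
  by (simp_all add: split_qm_def)

lemma split_qm_concat_replicate:
  "split_qm fA fB (concat (replicate n u)) = real n * split_qm fA fB u"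
  by (induction n) (simp_all add: algebra_simps)

lemma fp_reduced_concat_replicate:
  assumes "fp_reduced A B w" and "isl (hd w) \<noteq> isl (last w)"
  shows "fp_reduced A B (concat (replicate n w))"
proof (induction n)
  case 0
  then show ?case by simp
next
  case (Suc n)
  have "hd (concat (replicate n w)) = hd w" if "n > 0" "w \<noteq> []"
    using that by (cases n) simp_all
  with Suc assms show ?case
    by (cases "n = 0 \<or> w = []") (auto simp: fp_reduced_iff successively_append_iff)
qed

lemma fp_pow_cyclically_reduced:
  assumes "fp_reduced A B w" and "isl (hd w) \<noteq> isl (last w)"
  shows "w [^]\<^bsub>free_product A B\<^esub> n = concat (replicate n w)"
proof (induction n)
  case 0
  then show ?case by (simp add: free_product_def)
next
  case (Suc n)
  have "concat (replicate n w) @ w = concat (replicate (Suc n) w)"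
    by (simp flip: replicate_append_same)
  with Suc fp_reduced_concat_replicate[OF assms, of "Suc n"] show ?case
    by (simp add: free_product_def fp_mult_reduced)
qed

lemma fp_reduced_insert_letter:
  assumes "fp_reduced A B (p # M @ [q])" and "M \<noteq> []"
    and "fp_reduced A B (p # m @ [q])" and "m \<noteq> []"
    and "fp_letter A B s" and "isl s = isl p" and "isl s = isl q"
  shows "fp_reduced A B (p # M @ s # m @ [q])"
  using assms by (auto simp: fp_reduced_iff successively_append_iff successively_Cons)

lemma fp_reduced_merge_pow:
  assumes "fp_reduced A B (p # m @ [q])" and "m \<noteq> []"
    and "fp_letter A B s" and "isl s = isl p" and "isl s = isl q"
  shows "fp_reduced A B (p # concat (replicate k (m @ [s])) @ m @ [q])"
proof (induction k)
  case 0
  with assms show ?case by simp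
next
  case (Suc k)
  from fp_reduced_insert_letter[OF _ _ assms, of "concat (replicate k (m @ [s])) @ m"] Suc assms(2)
  show ?case by (simp flip: replicate_append_same)
qed

lemma fp_pow_merge:
  assumes W: "W = p # m @ [q]" and "fp_reduced A B W" and "m \<noteq> []"
    and "fp_letter A B s" and "isl s = isl p" and "isl s = isl q"
    and merge: "\<And>r. fp_cons A B q (p # r) = s # r"
  shows "W [^]\<^bsub>free_product A B\<^esub> Suc k = p # concat (replicate k (m @ [s])) @ m @ [q]"
proof (induction k)
  case 0
  with assms show ?case by (simp add: free_product_def fp_mult_def)
next
  case (Suc k)
  let ?M = "concat (replicate k (m @ [s])) @ m"
  have "W [^]\<^bsub>free_product A B\<^esub> Suc (Suc k) = fp_mult A B ((p # ?M) @ [q]) W"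
    using Suc by (simp add: free_product_def)
  also have "\<dots> = fp_mult A B (p # ?M) (s # m @ [q])"
    by (simp only: fp_mult_snoc W merge)
  also have "\<dots> = p # concat (replicate (Suc k) (m @ [s])) @ m @ [q]"
    using fp_reduced_merge_pow[OF assms(2)[unfolded W] assms(3-6), of "Suc k"]
    by (simp add: fp_mult_reduced flip: replicate_append_same)
  finally show ?case .
qed

lemma lim_affine_inverse:
  assumes "\<And>n. n \<ge> 1 \<Longrightarrow> s n = c + d / real n"
  shows "lim s = (c::real)"
proof (rule limI)
  have "(\<lambda>n. c + d / real n) \<longlonglongrightarrow> c + 0"
    by (intro tendsto_add tendsto_const tendsto_divide_0[OF tendsto_const]
        filterlim_at_top_imp_at_infinity filterlim_real_sequentially)
  then have "(\<lambda>n. c + d / real n) \<longlonglongrightarrow> c"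
    by simp
  then show "s \<longlonglongrightarrow> c"
    by (rule Lim_transform_eventually)
      (auto intro!: eventually_sequentiallyI[of 1] simp: assms)
qed

lemma homogenization_split_qm_cyclically_reduced:
  assumes "fp_reduced A B w" and "isl (hd w) \<noteq> isl (last w)"
  shows "homogenization (free_product A B) (split_qm fA fB) w = split_qm fA fB w"
  unfolding homogenization_def
  by (rule lim_affine_inverse[where d = 0])
    (simp add: fp_pow_cyclically_reduced[OF assms] split_qm_concat_replicate)

lemma homogenization_split_qm_merge:
  assumes "W = p # m @ [q]" and "fp_reduced A B W" and "m \<noteq> []"
    and "fp_letter A B s" and "isl s = isl p" and "isl s = isl q"
    and "\<And>r. fp_cons A B q (p # r) = s # r"
  shows "homogenization (free_product A B) (split_qm fA fB) W
           = split_qm fA fB m + case_sum fA fB s"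
  unfolding homogenization_def
proof (rule lim_affine_inverse[where d = "case_sum fA fB p + case_sum fA fB q - case_sum fA fB s"])
  fix n :: nat
  assume "n \<ge> 1"
  then obtain k where n: "n = Suc k"
    using not0_implies_Suc by force
  show "split_qm fA fB (W [^]\<^bsub>free_product A B\<^esub> n) / real n
      = split_qm fA fB m + case_sum fA fB s
        + (case_sum fA fB p + case_sum fA fB q - case_sum fA fB s) / real n"
    unfolding n fp_pow_merge[OF assms]
    by (simp add: split_qm_concat_replicate field_simps)
qed

lemma qm_defect_ge:
  assumes "x \<in> carrier G" and "y \<in> carrier G"
  shows "ereal \<bar>f (x \<otimes>\<^bsub>G\<^esub> y) - f x - f y\<bar> \<le> qm_defect G f"
  unfolding qm_defect_def by (rule SUP_upper2[of "(x, y)"]) (use assms in auto)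

lemma qm_defect_nonneg:
  assumes "carrier G \<noteq> {}"
  shows "0 \<le> qm_defect G f"
proof -
  from assms obtain x where x: "x \<in> carrier G"
    by blast
  have "0 \<le> ereal \<bar>f (x \<otimes>\<^bsub>G\<^esub> x) - f x - f x\<bar>"
    by simp
  also have "\<dots> \<le> qm_defect G f"
    using qm_defect_ge[OF x x] .
  finally show ?thesis .
qed

lemma two_qm_defect_le:
  assumes "carrier G \<noteq> {}"
    and "\<And>x y. x \<in> carrier G \<Longrightarrow> y \<in> carrier G \<Longrightarrow>
           ereal (2 * \<bar>f (x \<otimes>\<^bsub>G\<^esub> y) - f x - f y\<bar>) \<le> R"
  shows "2 * qm_defect G f \<le> R"
proof -
  have "2 * qm_defect G f = (SUP p \<in> carrier G \<times> carrier G.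
      2 * ereal \<bar>f (fst p \<otimes>\<^bsub>G\<^esub> snd p) - f (fst p) - f (snd p)\<bar>)"
    unfolding qm_defect_def by (rule SUP_ereal_mult_left[symmetric]) (use assms(1) in auto)
  also have "\<dots> \<le> R"
  proof (rule SUP_least)
    fix p
    assume "p \<in> carrier G \<times> carrier G"
    with assms(2)[of "fst p" "snd p"]
    show "2 * ereal \<bar>f (fst p \<otimes>\<^bsub>G\<^esub> snd p) - f (fst p) - f (snd p)\<bar> \<le> R"
      by (simp add: mem_Times_iff)
  qed
  finally show ?thesis .
qed

lemma alternating_defect_eq_0:
  fixes G (structure)
  assumes "group G" and "alternating G f" and "x \<in> carrier G" and "y \<in> carrier G"
    and "x = \<one>\<^bsub>G\<^esub> \<or> y = \<one>\<^bsub>G\<^esub> \<or> x \<otimes>\<^bsub>G\<^esub> y = \<one>\<^bsub>G\<^esub>"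
  shows "f (x \<otimes>\<^bsub>G\<^esub> y) - f x - f y = 0"
proof -
  interpret group G by fact
  have inv: "f (inv x) = - f x" if "x \<in> carrier G" for x
    using assms(2) that unfolding alternating_def by blast
  have "f \<one> = - f \<one>"
    using inv[OF one_closed] by simp
  then have "f \<one> = 0"
    by simp
  moreover have "y = inv x" if "x \<otimes> y = \<one>"
    using that assms(3,4) by (metis inv_comm inv_equality)
  ultimately show ?thesis
    using assms(3-5) inv by auto
qed

lemma two_defect_le_defect_homogenization_split_qm:
  assumes "group A" and "group B" and "alternating B fB"
    and x: "x \<in> carrier A" "x \<noteq> \<one>\<^bsub>A\<^esub>" and y: "y \<in> carrier A" "y \<noteq> \<one>\<^bsub>A\<^esub>"
    and xy: "x \<otimes>\<^bsub>A\<^esub> y \<noteq> \<one>\<^bsub>A\<^esub>"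
    and b: "b \<in> carrier B" "b \<noteq> \<one>\<^bsub>B\<^esub>"
  shows "ereal (2 * \<bar>fA (x \<otimes>\<^bsub>A\<^esub> y) - fA x - fA y\<bar>)
     \<le> qm_defect (free_product A B) (homogenization (free_product A B) (split_qm fA fB))"
proof -
  let ?H = "homogenization (free_product A B) (split_qm fA fB)"
  define b' where "b' = inv\<^bsub>B\<^esub> b"
  have b': "b' \<in> carrier B" "b' \<noteq> \<one>\<^bsub>B\<^esub>" "b' \<otimes>\<^bsub>B\<^esub> b = \<one>\<^bsub>B\<^esub>"
    using b unfolding b'_def
    by (simp_all add: group.inv_closed[OF assms(2)] group.inv_eq_1_iff[OF assms(2)]
        group.l_inv[OF assms(2)])
  have fB_b': "fB b' = - fB b"
    using assms(3) b unfolding alternating_def b'_def by blast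
  have xy_closed: "x \<otimes>\<^bsub>A\<^esub> y \<in> carrier A"
    using x y by (simp add: group.is_monoid[OF assms(1)] monoid.m_closed)
  define g where "g = [Inl y, Inr b, Inl x, Inr b']"
  define h where "h = [Inr b, Inl y, Inr b', Inl x]"
  have g: "fp_reduced A B g" and h: "fp_reduced A B h"
    using x y b b' by (auto simp: g_def h_def)
  have gh: "fp_mult A B g h = Inl y # [Inr b, Inl (x \<otimes>\<^bsub>A\<^esub> y), Inr b'] @ [Inl x]"
    using x y b b' xy by (simp add: g_def h_def fp_mult_def Let_def)
  have "?H g = fA y + fA x" and "?H h = fA y + fA x"
    using homogenization_split_qm_cyclically_reduced[OF g]
      homogenization_split_qm_cyclically_reduced[OF h]
    by (simp_all add: g_def h_def fB_b')
  moreover have "?H (fp_mult A B g h) = 2 * fA (x \<otimes>\<^bsub>A\<^esub> y)"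
    using homogenization_split_qm_merge[OF gh, where A = A and B = B and fA = fA and fB = fB
        and s = "Inl (x \<otimes>\<^bsub>A\<^esub> y)"] gh x y b b' fB_b' xy xy_closed
    by (simp add: fp_letter_def Let_def)
  ultimately have "\<bar>?H (fp_mult A B g h) - ?H g - ?H h\<bar>
      = 2 * \<bar>fA (x \<otimes>\<^bsub>A\<^esub> y) - fA x - fA y\<bar>"
    by (simp add: abs_if)
  with qm_defect_ge[of g "free_product A B" h ?H] g h show ?thesis
    by (simp add: free_product_def)
qed

lemma two_qm_defect_le_defect_homogenization_split_qm:
  assumes "group A" and "group B" and "alternating A fA" and "alternating B fB"
    and "carrier B \<noteq> {\<one>\<^bsub>B\<^esub>}"
  shows "2 * qm_defect A fA
     \<le> qm_defect (free_product A B) (homogenization (free_product A B) (split_qm fA fB))"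
proof (rule two_qm_defect_le)
  show "carrier A \<noteq> {}"
    using assms(1) group.is_monoid monoid.one_closed by blast
  have nonneg:
    "0 \<le> qm_defect (free_product A B) (homogenization (free_product A B) (split_qm fA fB))"
    by (rule qm_defect_nonneg) (auto simp: free_product_def intro: exI[of _ "[]"])
  obtain b where b: "b \<in> carrier B" "b \<noteq> \<one>\<^bsub>B\<^esub>"
    using assms(2,5) by (auto simp: group.is_monoid monoid.one_closed)
  fix x y
  assume x: "x \<in> carrier A" and y: "y \<in> carrier A"
  show "ereal (2 * \<bar>fA (x \<otimes>\<^bsub>A\<^esub> y) - fA x - fA y\<bar>)
     \<le> qm_defect (free_product A B) (homogenization (free_product A B) (split_qm fA fB))"
  proof (cases "x = \<one>\<^bsub>A\<^esub> \<or> y = \<one>\<^bsub>A\<^esub> \<or> x \<otimes>\<^bsub>A\<^esub> y = \<one>\<^bsub>A\<^esub>")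
    case True
    with alternating_defect_eq_0[OF assms(1,3) x y] nonneg show ?thesis
      by (simp add: zero_ereal_def)
  next
    case False
    with two_defect_le_defect_homogenization_split_qm[OF assms(1,2,4) x _ y _ _ b] show ?thesis
      by blast
  qed
qed

definition swap_letter :: "'a + 'b \<Rightarrow> 'b + 'a" where
  "swap_letter = case_sum Inr Inl"

lemma swap_letter_simps [simp]:
  "swap_letter (Inl a) = Inr a" "swap_letter (Inr b) = Inl b"
  by (simp_all add: swap_letter_def)

lemma swap_letter_involution [simp]: "swap_letter (swap_letter l) = l"
  by (cases l) simp_all

lemma fp_reduced_swap: "fp_reduced B A (map swap_letter w) \<longleftrightarrow> fp_reduced A B w"
  by (induction A B w rule: fp_reduced.induct) auto

lemma fp_cons_swap:
  "fp_cons B A (swap_letter l) (map swap_letter w) = map swap_letter (fp_cons A B l w)"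
  by (induction A B l w rule: fp_cons.induct) (auto simp: Let_def)

lemma fp_mult_swap:
  "fp_mult B A (map swap_letter u) (map swap_letter v) = map swap_letter (fp_mult A B u v)"
  by (induction u) (simp_all add: fp_mult_def fp_cons_swap)

lemma fp_pow_swap:
  "map swap_letter w [^]\<^bsub>free_product B A\<^esub> (n::nat)
     = map swap_letter (w [^]\<^bsub>free_product A B\<^esub> n)"
  by (induction n) (simp_all add: free_product_def fp_mult_swap)

lemma split_qm_swap: "split_qm fB fA (map swap_letter w) = split_qm fA fB w"
  by (induction w) (auto split: sum.split)

lemma homogenization_split_qm_swap:
  "homogenization (free_product B A) (split_qm fB fA) (map swap_letter w)
     = homogenization (free_product A B) (split_qm fA fB) w"
  by (simp add: homogenization_def fp_pow_swap split_qm_swap)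

lemma qm_defect_transfer:
  assumes "bij_betw \<phi> (carrier G) (carrier H)"
    and "\<And>x y. x \<in> carrier G \<Longrightarrow> y \<in> carrier G \<Longrightarrow> \<phi> (x \<otimes>\<^bsub>G\<^esub> y) = \<phi> x \<otimes>\<^bsub>H\<^esub> \<phi> y"
    and "\<And>x. g (\<phi> x) = f x"
  shows "qm_defect H g = qm_defect G f"
proof -
  have "carrier H \<times> carrier H = map_prod \<phi> \<phi> ` (carrier G \<times> carrier G)"
    using assms(1) by (simp add: bij_betw_def map_prod_surj_on)
  then have "qm_defect H g = (SUP p \<in> carrier G \<times> carrier G.
      ereal \<bar>g (\<phi> (fst p) \<otimes>\<^bsub>H\<^esub> \<phi> (snd p)) - g (\<phi> (fst p)) - g (\<phi> (snd p))\<bar>)"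
    unfolding qm_defect_def by (simp add: image_comp comp_def)
  also have "\<dots> = qm_defect G f"
    unfolding qm_defect_def
    by (intro SUP_cong refl) (clarsimp simp: assms(3) simp flip: assms(2))
  finally show ?thesis .
qed

text \<open>Permutative in \<open>A, B\<close>: never use it as a simp or unfolding rule.\<close>

lemma qm_defect_homogenization_split_qm_swap:
  "qm_defect (free_product B A) (homogenization (free_product B A) (split_qm fB fA))
     = qm_defect (free_product A B) (homogenization (free_product A B) (split_qm fA fB))"
proof (rule qm_defect_transfer)
  show "bij_betw (map swap_letter) (carrier (free_product A B)) (carrier (free_product B A))"
    by (rule bij_betw_byWitness[where f' = "map swap_letter"])
      (auto simp: free_product_def fp_reduced_swap comp_def)
qed (simp add: free_product_def fp_mult_swap, rule homogenization_split_qm_swap)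

theorem lemma3p2:
  fixes A :: "('a,'m) monoid_scheme" and B :: "('b,'n) monoid_scheme"
    and fA :: "'a \<Rightarrow> real" and fB :: "'b \<Rightarrow> real"
  assumes "group A" and "group B"
    and "carrier A \<noteq> {\<one>\<^bsub>A\<^esub>}" and "carrier B \<noteq> {\<one>\<^bsub>B\<^esub>}"
    and "quasimorphism A fA" and "alternating A fA"
    and "quasimorphism B fB" and "alternating B fB"
  shows "qm_defect (free_product A B) (homogenization (free_product A B) (split_qm fA fB))
           \<ge> 2 * max (qm_defect A fA) (qm_defect B fB)"
proof -
  let ?D = "qm_defect (free_product A B) (homogenization (free_product A B) (split_qm fA fB))"
  have A_side: "2 * qm_defect A fA \<le> ?D"
    by (rule two_qm_defect_le_defect_homogenization_split_qm) (fact assms)+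
  have "2 * qm_defect B fB
      \<le> qm_defect (free_product B A) (homogenization (free_product B A) (split_qm fB fA))"
    by (rule two_qm_defect_le_defect_homogenization_split_qm) (fact assms)+
  also have "\<dots> = ?D"
    by (rule qm_defect_homogenization_split_qm_swap)
  finally have B_side: "2 * qm_defect B fB \<le> ?D" .
  from A_side B_side show ?thesis
    by (cases "qm_defect A fA \<le> qm_defect B fB") (simp_all add: max_def)
qed

end
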